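(* Consider the tree model of size $L$ (described in the context) in which the root value is chosen uniformly at random in $[0,1]$, and let $\Theta$ be the number of open paths. Then $\mathbb{E}^*(\Theta)=1$ and $$\lim_{L\to\infty}\frac{\operatorname{Var}^*(\Theta)}{L}=1.$$
   Context: Tree model of size $L$: a deterministic rooted tree with levels $0,1,\ldots,L$; the root is at level $0$, and every node at level $k$ ($0\le k\le L-1$) has exactly $L-k$ children at level $k+1$, so there are $L!$ leaves and $L!$ root-to-leaf paths. Every leaf carries the value $1$; the root carries a value $x\in[0,1]$; every other node carries an independent uniform random value on $[0,1]$. A root-to-leaf path is open if the values along it form a strictly increasing sequence; $\Theta$ is the number of open paths. $\mathbb{E}^*$ and $\operatorname{Var}^*$ denote expectation and variance when the root value is itself uniform on $[0,1]$ and independent of the other values. *)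

theory Defs
  imports "HOL-Probability.Probability"
begin

text \<open>A node at level k is identified with the list
  [c_1,...,c_k] of child indices chosen from the root, where the child index
  at depth j (0-based) satisfies c < L - j (a node at level j has L - j children).
  The root is the empty list; leaves are the lists of length L.\<close>

definition tree_node :: "nat \<Rightarrow> nat list \<Rightarrow> bool" where
  "tree_node L xs \<longleftrightarrow> length xs \<le> L \<and> (\<forall>j<length xs. xs ! j < L - j)"

definition random_nodes :: "nat \<Rightarrow> nat list set" where
  "random_nodes L = {xs. tree_node L xs \<and> length xs < L}"

text \<open>Root-to-leaf paths, identified with the leaves.\<close>
definition tree_paths :: "nat \<Rightarrow> nat list set" where
  "tree_paths L = {xs. tree_node L xs \<and> length xs = L}"

definition tree_space :: "nat \<Rightarrow> (nat list \<Rightarrow> real) measure" where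
  "tree_space L = PiM (random_nodes L) (\<lambda>_. uniform_measure lborel {0..1::real})"

definition node_value :: "nat \<Rightarrow> (nat list \<Rightarrow> real) \<Rightarrow> nat list \<Rightarrow> real" where
  "node_value L \<omega> xs = (if length xs = L then 1 else \<omega> xs)"

definition open_path :: "nat \<Rightarrow> (nat list \<Rightarrow> real) \<Rightarrow> nat list \<Rightarrow> bool" where
  "open_path L \<omega> xs \<longleftrightarrow>
     (\<forall>k<L. node_value L \<omega> (take k xs) < node_value L \<omega> (take (Suc k) xs))"

definition Theta :: "nat \<Rightarrow> (nat list \<Rightarrow> real) \<Rightarrow> real" where
  "Theta L \<omega> = real (card {xs \<in> tree_paths L. open_path L \<omega> xs})"

definition Var_star :: "nat \<Rightarrow> real" where
  "Var_star L = (\<integral>\<omega>. (Theta L \<omega> - (\<integral>\<omega>'. Theta L \<omega>' \<partial>tree_space L))\<^sup>2 \<partial>tree_space L)"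

end

theory Submission
  imports Defs
begin

text \<open>
  The number of open paths is the sum of the indicators of the L! paths. Encoding nodes by
  their prefixes, a path is open iff the values at its L random nodes (the root included)
  increase and stay below 1, an event of probability 1/L!; hence the expectation is 1.

  Two paths whose longest common prefix has length m share the nodes of levels 0..m and
  have a = L - 1 - m random nodes of their own. Integrating out the values from the leaves
  towards the root, each private chain above a value t contributes (1 - t)^a / a!, and the
  shared chain then gives the probability (2a)! / (a!^2 (L + a)!) that both paths are open.
  Counting pairs of paths by m, the variance becomes the sum over a < L of
  a * C(2a, a) / C(L + a, a). A Wilf-Zeilberger certificate turns this sum into a
  first-order recurrence in L, and the recurrence keeps the variance within a constant of L.
\<close>

abbreviation U01 :: "real measure" where
  "U01 \<equiv> uniform_measure lborel {0..1}"

abbreviation U01_cube :: "'i set \<Rightarrow> ('i \<Rightarrow> real) measure" where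
  "U01_cube K \<equiv> PiM K (\<lambda>_. U01)"

lemma prob_space_U01: "prob_space U01"
  by (rule prob_space_uniform_measure) auto

lemma prob_space_U01_cube: "prob_space (U01_cube K)"
  by (rule prob_space_PiM) (rule prob_space_U01)

interpretation U01_product: product_sigma_finite "\<lambda>_::'i. U01"
  by (simp add: product_sigma_finite_def prob_space_imp_sigma_finite prob_space_U01)

lemma sets_U01 [simp, measurable_cong]: "sets U01 = sets borel"
  by simp

lemma nn_integral_U01:
  assumes [measurable]: "f \<in> borel_measurable borel"
  shows "(\<integral>\<^sup>+y. f y \<partial>U01) = (\<integral>\<^sup>+y. f y * indicator {0..1} y \<partial>lborel)"
  by (subst nn_integral_uniform_measure) (auto simp: divide_ennreal_def)

lemma nn_integral_U01_cong:
  assumes [measurable]: "h \<in> borel_measurable borel" "h' \<in> borel_measurable borel"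
    and eq: "\<And>y. 0 < y \<Longrightarrow> y < 1 \<Longrightarrow> h y = h' y"
  shows "(\<integral>\<^sup>+y. h y \<partial>U01) = (\<integral>\<^sup>+y. h' y \<partial>U01)"
proof -
  have "AE y in lborel. y \<noteq> 0 \<and> y \<noteq> (1::real)"
    by (intro eventually_conj AE_lborel_singleton)
  then have "AE y in lborel. h y * indicator {0..1} y = h' y * indicator {0..1} y"
    by eventually_elim (auto simp: indicator_def eq)
  then show ?thesis
    by (simp add: nn_integral_U01 nn_integral_cong_AE)
qed

subsection \<open>The tail operator\<close>

text \<open>Integrating out the next value of an increasing chain that currently sits at z.\<close>

definition tail_op :: "(real \<Rightarrow> ennreal) \<Rightarrow> real \<Rightarrow> ennreal" where
  "tail_op h z = (\<integral>\<^sup>+y. indicator {z<..} y * h y \<partial>U01)"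

lemma tail_op_measurable [measurable]:
  assumes [measurable]: "h \<in> borel_measurable borel"
  shows "tail_op h \<in> borel_measurable borel"
proof -
  have "(\<lambda>(z, y). indicator {z<..} y * h y) = (\<lambda>(z::real, y). if z < y then h y else 0)"
    by (auto simp: indicator_def fun_eq_iff)
  moreover have "(\<lambda>(z::real, y). if z < y then h y else 0) \<in> borel_measurable (borel \<Otimes>\<^sub>M (borel::real measure))"
    by measurable
  ultimately have "(\<lambda>(z, y). indicator {z<..} y * h y) \<in> borel_measurable (borel \<Otimes>\<^sub>M U01)"
    using measurable_cong_sets[OF sets_pair_measure_cong[OF refl sets_U01], of borel borel] by simp
  then show ?thesis
    unfolding tail_op_def
    using sigma_finite_measure.borel_measurable_nn_integral[OF prob_space_imp_sigma_finite[OF prob_space_U01],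
        of "\<lambda>z y. indicator {z<..} y * h y" borel]
    by simp
qed

lemma funpow_tail_op_measurable [measurable]:
  "h \<in> borel_measurable borel \<Longrightarrow> (tail_op ^^ j) h \<in> borel_measurable borel"
  by (induction j) auto

lemma tail_op_cong:
  assumes [measurable]: "h \<in> borel_measurable borel" "h' \<in> borel_measurable borel"
    and eq: "\<And>y. 0 < y \<Longrightarrow> y < 1 \<Longrightarrow> h y = h' y"
  shows "tail_op h = tail_op h'"
  unfolding tail_op_def by (intro ext nn_integral_U01_cong) (auto simp: eq)

lemma funpow_tail_op_cong:
  assumes [measurable]: "h \<in> borel_measurable borel" "h' \<in> borel_measurable borel"
    and eq: "\<And>y. 0 < y \<Longrightarrow> y < 1 \<Longrightarrow> h y = h' y" and z: "0 < z" "z < 1"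
  shows "(tail_op ^^ j) h z = (tail_op ^^ j) h' z"
proof (cases j)
  case 0
  then show ?thesis using eq z by simp
next
  case (Suc i)
  then show ?thesis
    using tail_op_cong[OF assms(1-3)] by (simp add: funpow_Suc_right del: funpow.simps)
qed

lemma nn_integral_power_Icc:
  fixes c z :: real
  assumes "c \<ge> 0" "0 \<le> z" "z \<le> 1"
  shows "(\<integral>\<^sup>+y. ennreal (c * (1-y)^k) * indicator {z..1} y \<partial>lborel) = ennreal (c * (1-z)^Suc k / Suc k)"
proof -
  have "(\<integral>\<^sup>+y. ennreal (c * (1-y)^k) * indicator {z..1} y \<partial>lborel) =
     ennreal ((\<lambda>y. - c * (1-y)^Suc k / Suc k) 1 - (\<lambda>y. - c * (1-y)^Suc k / Suc k) z)"
    using assms by (intro nn_integral_FTC_Icc) (auto intro!: derivative_eq_intros simp del: power_Suc)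
  then show ?thesis by simp
qed

lemma tail_op_power:
  fixes c :: real
  assumes "c \<ge> 0" "0 \<le> z" "z \<le> 1"
  shows "tail_op (\<lambda>y. ennreal (c * (1-y)^k)) z = ennreal (c * (1-z)^Suc k / Suc k)"
proof -
  have "AE y in lborel. indicator {z<..} y * ennreal (c * (1-y)^k) * indicator {0..1} y
      = ennreal (c * (1-y)^k) * indicator {z..1} y"
    using AE_lborel_singleton[of z] by eventually_elim (use assms in \<open>auto simp: indicator_def\<close>)
  then show ?thesis
    unfolding tail_op_def using nn_integral_power_Icc[OF assms]
    by (simp add: nn_integral_U01 nn_integral_cong_AE)
qed

lemma nn_integral_U01_power:
  fixes c :: real
  assumes "c \<ge> 0"
  shows "(\<integral>\<^sup>+y. ennreal (c * (1-y)^k) \<partial>U01) = ennreal (c / Suc k)"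
  using nn_integral_power_Icc[OF assms, of 0] by (simp add: nn_integral_U01)

lemma funpow_tail_op_power:
  fixes c :: real
  assumes "c \<ge> 0" "0 < z" "z < 1"
  shows "(tail_op ^^ j) (\<lambda>y. ennreal (c * (1-y)^k)) z = ennreal (c * fact k / fact (k+j) * (1-z)^(k+j))"
  using assms(2,3)
proof (induction j arbitrary: z)
  case 0
  then show ?case by simp
next
  case (Suc j)
  have "(tail_op ^^ j) (\<lambda>y. ennreal (c * (1-y)^k)) \<in> borel_measurable borel"
    by simp
  then have "tail_op ((tail_op ^^ j) (\<lambda>y. ennreal (c * (1-y)^k)))
      = tail_op (\<lambda>y. ennreal (c * fact k / fact (k+j) * (1-y)^(k+j)))"
    by (rule tail_op_cong) (auto simp: Suc.IH)
  then have "(tail_op ^^ Suc j) (\<lambda>y. ennreal (c * (1-y)^k)) z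
      = tail_op (\<lambda>y. ennreal (c * fact k / fact (k+j) * (1-y)^(k+j))) z"
    by simp
  also have "\<dots> = ennreal (c * fact k / fact (k+j) * (1-z)^Suc (k+j) / Suc (k+j))"
    using Suc.prems assms by (intro tail_op_power) auto
  also have "\<dots> = ennreal (c * fact k / fact (k + Suc j) * (1-z)^(k + Suc j))"
    by (simp add: field_simps)
  finally show ?case .
qed

definition below_one :: "real \<Rightarrow> ennreal" where
  "below_one = indicator {..<1}"

lemma below_one_measurable [measurable]: "below_one \<in> borel_measurable borel"
  unfolding below_one_def by simp

lemma funpow_tail_op_below_one:
  assumes "0 < z" "z < 1"
  shows "(tail_op ^^ a) below_one z = ennreal ((1-z)^a / fact a)"
proof -
  have "(tail_op ^^ a) below_one z = (tail_op ^^ a) (\<lambda>y. ennreal (1 * (1-y)^0)) z"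
    by (rule funpow_tail_op_cong) (use assms in \<open>auto simp: below_one_def\<close>)
  then show ?thesis
    using funpow_tail_op_power[of 1 z a 0] assms by simp
qed

lemma nn_integral_funpow_tail_op_branches:
  "(\<integral>\<^sup>+y. (tail_op ^^ n) (\<lambda>t. (tail_op ^^ a) below_one t * (tail_op ^^ b) below_one t) y \<partial>U01)
     = ennreal (fact (a+b) / (fact a * fact b * fact (a+b+n+1)))"
proof -
  define c :: real where "c = 1 / (fact a * fact b)"
  have c: "c \<ge> 0" by (simp add: c_def)
  have branches: "(tail_op ^^ a) below_one t * (tail_op ^^ b) below_one t = ennreal (c * (1-t)^(a+b))"
    if "0 < t" "t < 1" for t
    using that by (simp add: funpow_tail_op_below_one c_def power_add field_simps flip: ennreal_mult)
  have "(\<integral>\<^sup>+y. (tail_op ^^ n) (\<lambda>t. (tail_op ^^ a) below_one t * (tail_op ^^ b) below_one t) y \<partial>U01)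
      = (\<integral>\<^sup>+y. (tail_op ^^ n) (\<lambda>t. ennreal (c * (1-t)^(a+b))) y \<partial>U01)"
    by (intro nn_integral_U01_cong funpow_tail_op_cong) (auto simp: branches)
  also have "\<dots> = (\<integral>\<^sup>+y. ennreal (c * fact (a+b) / fact (a+b+n) * (1-y)^(a+b+n)) \<partial>U01)"
    by (rule nn_integral_U01_cong) (auto simp: funpow_tail_op_power c)
  also have "\<dots> = ennreal (c * fact (a+b) / fact (a+b+n) / Suc (a+b+n))"
    by (rule nn_integral_U01_power) (simp add: c)
  also have "\<dots> = ennreal (fact (a+b) / (fact a * fact b * fact (a+b+n+1)))"
    by (simp add: c_def field_simps)
  finally show ?thesis .
qed

subsection \<open>Increasing chains of independent uniform values\<close>

lemma pred_sorted_wrt_map: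
  fixes w :: "'a \<Rightarrow> 'i \<Rightarrow> real"
  assumes "\<And>v. v \<in> set vs \<Longrightarrow> (\<lambda>x. w x v) \<in> borel_measurable M"
  shows "Measurable.pred M (\<lambda>x. sorted_wrt (<) (map (w x) vs))"
  using assms
proof (induction vs rule: induct_list012)
  case (3 u v vs)
  have "Measurable.pred M (\<lambda>x. w x u < w x v)"
    using borel_measurable_less[of "\<lambda>x. w x u" M "\<lambda>x. w x v"] "3.prems" by (simp add: pred_def)
  moreover have "Measurable.pred M (\<lambda>x. sorted_wrt (<) (map (w x) (v # vs)))"
    using "3.prems" by (intro "3.IH") auto
  ultimately show ?case
    unfolding list.map sorted_wrt2[OF transp_on_less] by measurable
qed simp_all

lemma sorted_wrt_less_append:
  fixes xs ys :: "'a::linorder list"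
  assumes "xs \<noteq> []"
  shows "sorted_wrt (<) (xs @ ys) \<longleftrightarrow> sorted_wrt (<) xs \<and> sorted_wrt (<) (last xs # ys)"
proof -
  obtain as a where "xs = as @ [a]"
    using assms by (metis append_butlast_last_id)
  then show ?thesis
    by (auto simp: sorted_wrt_append dest: order.strict_trans)
qed

definition chain_weight :: "'i \<Rightarrow> 'i list \<Rightarrow> (real \<Rightarrow> ennreal) \<Rightarrow> ('i \<Rightarrow> real) \<Rightarrow> ennreal" where
  "chain_weight r vs h w = (if sorted_wrt (<) (map w (r # vs)) then h (w (last (r # vs))) else 0)"

lemma chain_weight_measurable:
  assumes "set (r # vs) \<subseteq> K" and h: "h \<in> borel_measurable borel"
  shows "chain_weight r vs h \<in> borel_measurable (U01_cube K)"
proof -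
  have "last (r # vs) \<in> K"
    using assms last_in_set[of "r # vs"] by blast
  then have "(\<lambda>w. h (w (last (r # vs)))) \<in> borel_measurable (U01_cube K)"
    using h by simp
  moreover have "Measurable.pred (U01_cube K) (\<lambda>w. sorted_wrt (<) (map w (r # vs)))"
    by (rule pred_sorted_wrt_map) (use assms in auto)
  ultimately show ?thesis
    unfolding chain_weight_def by measurable
qed

lemma chain_weight_upd:
  assumes "v \<notin> set (r # vs)"
  shows "chain_weight r vs h (w(v := y)) = chain_weight r vs h w"
proof -
  have "last (r # vs) \<in> set (r # vs)"
    by (rule last_in_set) simp
  then show ?thesis
    using assms unfolding chain_weight_def map_fun_upd[OF assms] by auto
qed

lemma chain_weight_one_mult:
  "chain_weight r vs (\<lambda>_. 1) w * h (w (last (r # vs))) = chain_weight r vs h w"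
  by (simp add: chain_weight_def)

lemma chain_weight_one_idem:
  "chain_weight r vs (\<lambda>_. 1) w * chain_weight r vs (\<lambda>_. 1) w = chain_weight r vs (\<lambda>_. 1) w"
  by (simp add: chain_weight_def)

lemma chain_weight_append:
  "chain_weight r (vs @ us) h w = chain_weight r vs (\<lambda>_. 1) w * chain_weight (last (r # vs)) us h w"
proof -
  have sorted: "sorted_wrt (<) (map w (r # vs @ us))
      \<longleftrightarrow> sorted_wrt (<) (map w (r # vs)) \<and> sorted_wrt (<) (map w (last (r # vs) # us))"
    using sorted_wrt_less_append[of "map w (r # vs)" "map w us"] by (simp add: last_map)
  have last: "last (r # vs @ us) = last (last (r # vs) # us)"
    by (cases us) auto
  show ?thesis
    unfolding chain_weight_def sorted last by simp
qed

lemma chain_weight_snoc_upd: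
  assumes v: "v \<notin> set (r # vs)"
  shows "chain_weight r (vs @ [v]) h (w(v := y))
       = chain_weight r vs (\<lambda>_. 1) w * (indicator {w (last (r # vs))<..} y * h y)"
proof -
  have "last (r # vs) \<in> set (r # vs)"
    by (rule last_in_set) simp
  then have "last (r # vs) \<noteq> v"
    using v by auto
  then have "chain_weight (last (r # vs)) [v] h (w(v := y)) = indicator {w (last (r # vs))<..} y * h y"
    by (simp add: chain_weight_def indicator_def)
  then show ?thesis
    by (simp only: chain_weight_append chain_weight_upd[OF v])
qed

lemma nn_integral_chain_weight:
  assumes J: "finite J" "r \<in> J" and vs: "set vs \<inter> J = {}" "distinct vs"
    and F: "\<And>K. J \<subseteq> K \<Longrightarrow> F \<in> borel_measurable (U01_cube K)"
    and F_upd: "\<And>w v y. v \<in> set vs \<Longrightarrow> F (w(v := y)) = F w"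
    and h: "h \<in> borel_measurable borel"
  shows "(\<integral>\<^sup>+w. F w * chain_weight r vs h w \<partial>U01_cube (J \<union> set vs))
       = (\<integral>\<^sup>+w. F w * (tail_op ^^ length vs) h (w r) \<partial>U01_cube J)"
  using vs F_upd h
proof (induction vs arbitrary: h rule: rev_induct)
  case Nil
  then show ?case by (simp add: chain_weight_def)
next
  case (snoc v vs)
  have v: "v \<notin> J \<union> set vs" "v \<notin> set (r # vs)"
    using snoc.prems J by auto
  have [measurable]: "h \<in> borel_measurable borel"
    by fact
  have J_vs: "J \<union> set (vs @ [v]) = insert v (J \<union> set vs)"
    by auto
  have [measurable]: "F \<in> borel_measurable (U01_cube (insert v (J \<union> set vs)))"
    by (rule F) auto
  have [measurable]: "chain_weight r (vs @ [v]) h \<in> borel_measurable (U01_cube (insert v (J \<union> set vs)))"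
    using J by (intro chain_weight_measurable) auto
  have meas: "(\<lambda>w. F w * chain_weight r (vs @ [v]) h w) \<in> borel_measurable (U01_cube (insert v (J \<union> set vs)))"
    by measurable
  have "(\<integral>\<^sup>+w. F w * chain_weight r (vs @ [v]) h w \<partial>U01_cube (J \<union> set (vs @ [v])))
      = (\<integral>\<^sup>+w. (\<integral>\<^sup>+y. F (w(v := y)) * chain_weight r (vs @ [v]) h (w(v := y)) \<partial>U01) \<partial>U01_cube (J \<union> set vs))"
    unfolding J_vs using J(1) by (intro U01_product.product_nn_integral_insert[OF _ v(1) meas]) simp
  also have "\<dots> = (\<integral>\<^sup>+w. F w * chain_weight r vs (\<lambda>_. 1) w * tail_op h (w (last (r # vs))) \<partial>U01_cube (J \<union> set vs))"
  proof (rule nn_integral_cong)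
    fix w :: "'a \<Rightarrow> real"
    have F_v: "F (w(v := y)) = F w" for y
      by (rule snoc.prems(3)) simp
    have "F (w(v := y)) * chain_weight r (vs @ [v]) h (w(v := y))
        = F w * chain_weight r vs (\<lambda>_. 1) w * (indicator {w (last (r # vs))<..} y * h y)" for y
      by (simp only: F_v chain_weight_snoc_upd[OF v(2)] mult.assoc)
    then show "(\<integral>\<^sup>+y. F (w(v := y)) * chain_weight r (vs @ [v]) h (w(v := y)) \<partial>U01)
        = F w * chain_weight r vs (\<lambda>_. 1) w * tail_op h (w (last (r # vs)))"
      by (simp add: nn_integral_cmult tail_op_def)
  qed
  also have "\<dots> = (\<integral>\<^sup>+w. F w * chain_weight r vs (tail_op h) w \<partial>U01_cube (J \<union> set vs))"
    by (simp only: chain_weight_one_mult mult.assoc)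
  also have "\<dots> = (\<integral>\<^sup>+w. F w * (tail_op ^^ length vs) (tail_op h) (w r) \<partial>U01_cube J)"
    using snoc.prems by (intro snoc.IH) auto
  also have "(tail_op ^^ length vs) (tail_op h) = (tail_op ^^ length (vs @ [v])) h"
    by (simp add: funpow_Suc_right del: funpow.simps)
  finally show ?case .
qed

lemma nn_integral_U01_cube_component:
  assumes "finite J" "r \<in> J" and [measurable]: "k \<in> borel_measurable borel"
  shows "(\<integral>\<^sup>+w. k (w r) \<partial>U01_cube J) = (\<integral>\<^sup>+y. k y \<partial>U01)"
proof -
  interpret P: prob_space "U01_cube (J - {r})"
    by (rule prob_space_U01_cube)
  have "J = insert r (J - {r})"
    using assms by auto
  then have "(\<integral>\<^sup>+w. k (w r) \<partial>U01_cube J) = (\<integral>\<^sup>+w. k (w r) \<partial>U01_cube (insert r (J - {r})))"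
    by simp
  also have "\<dots> = (\<integral>\<^sup>+w. (\<integral>\<^sup>+y. k ((w(r := y)) r) \<partial>U01) \<partial>U01_cube (J - {r}))"
    by (rule U01_product.product_nn_integral_insert) (use assms in auto)
  also have "\<dots> = (\<integral>\<^sup>+y. k y \<partial>U01)"
    by (simp add: P.emeasure_space_1)
  finally show ?thesis .
qed

lemma nn_integral_integrate_branches:
  assumes K: "finite K" "set (r # vs @ as @ bs) \<subseteq> K" and dist: "distinct (r # vs @ as @ bs)"
  defines "c \<equiv> last (r # vs)"
    and "ga \<equiv> (tail_op ^^ length as) below_one" and "gb \<equiv> (tail_op ^^ length bs) below_one"
  shows "(\<integral>\<^sup>+w. chain_weight r vs (\<lambda>_. 1) w * chain_weight c as below_one w
              * chain_weight c bs below_one w \<partial>U01_cube K)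
       = (\<integral>\<^sup>+w. chain_weight r vs (\<lambda>y. ga y * gb y) w \<partial>U01_cube (K - set bs - set as))"
proof -
  have [measurable]: "ga \<in> borel_measurable borel" "gb \<in> borel_measurable borel"
    by (simp_all add: ga_def gb_def)
  define K1 where "K1 = K - set bs"
  define K2 where "K2 = K1 - set as"
  have c: "c \<in> set (r # vs)"
    unfolding c_def by (rule last_in_set) simp
  have K_split: "K = K1 \<union> set bs" "K1 = K2 \<union> set as"
    using K dist by (auto simp: K1_def K2_def)
  have fin: "finite K1" "finite K2"
    using K by (auto simp: K1_def K2_def)
  have in_K: "set (r # vs) \<subseteq> K2" "c \<in> K2" "set as \<subseteq> K1"
    using K dist c by (auto simp: K1_def K2_def)
  have disj: "set bs \<inter> K1 = {}" "set as \<inter> K2 = {}"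
    by (auto simp: K1_def K2_def)
  have not_in_bs: "v \<notin> set (r # vs)" "v \<notin> set (c # as)" if "v \<in> set bs" for v
    using that dist c by auto
  have not_in_as: "v \<notin> set (r # vs)" "v \<noteq> c" if "v \<in> set as" for v
    using that dist c by auto
  have measurable_K: "chain_weight r vs (\<lambda>_. 1) \<in> borel_measurable (U01_cube K')"
    "(\<lambda>w. w c) \<in> borel_measurable (U01_cube K')" if "K2 \<subseteq> K'" for K'
    using that in_K by (auto intro!: chain_weight_measurable) blast+
  have "(\<integral>\<^sup>+w. chain_weight r vs (\<lambda>_. 1) w * chain_weight c as below_one w
            * chain_weight c bs below_one w \<partial>U01_cube K)
      = (\<integral>\<^sup>+w. (chain_weight r vs (\<lambda>_. 1) w * chain_weight c as below_one w)
            * gb (w c) \<partial>U01_cube K1)"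
    unfolding K_split(1) gb_def
  proof (rule nn_integral_chain_weight)
    fix K' assume K': "K1 \<subseteq> K'"
    then have "K2 \<subseteq> K'"
      using K_split(2) by auto
    note [measurable] = measurable_K[OF this]
    have [measurable]: "chain_weight c as below_one \<in> borel_measurable (U01_cube K')"
      using K' in_K K_split by (intro chain_weight_measurable) auto
    show "(\<lambda>w. chain_weight r vs (\<lambda>_. 1) w * chain_weight c as below_one w) \<in> borel_measurable (U01_cube K')"
      by measurable
  qed (use fin in_K dist disj not_in_bs in \<open>auto simp: chain_weight_upd K_split\<close>)
  also have "\<dots> = (\<integral>\<^sup>+w. (chain_weight r vs (\<lambda>_. 1) w * gb (w c))
            * chain_weight c as below_one w \<partial>U01_cube (K2 \<union> set as))"
    by (simp add: K_split(2) ac_simps)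
  also have "\<dots> = (\<integral>\<^sup>+w. (chain_weight r vs (\<lambda>_. 1) w * gb (w c)) * ga (w c) \<partial>U01_cube K2)"
    unfolding ga_def
  proof (rule nn_integral_chain_weight)
    fix K' assume "K2 \<subseteq> K'"
    note [measurable] = measurable_K[OF this]
    show "(\<lambda>w. chain_weight r vs (\<lambda>_. 1) w * gb (w c)) \<in> borel_measurable (U01_cube K')"
      by measurable
  qed (use fin in_K dist disj not_in_as in \<open>auto simp: chain_weight_upd\<close>)
  also have "\<dots> = (\<integral>\<^sup>+w. chain_weight r vs (\<lambda>y. ga y * gb y) w \<partial>U01_cube K2)"
  proof -
    have "chain_weight r vs (\<lambda>y. ga y * gb y) w = chain_weight r vs (\<lambda>_. 1) w * (ga (w c) * gb (w c))" for w
      unfolding c_def by (rule chain_weight_one_mult[symmetric])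
    then show ?thesis
      by (simp add: ac_simps)
  qed
  finally show ?thesis
    by (simp add: K1_def K2_def)
qed

lemma nn_integral_two_branches:
  assumes K: "finite K" "set (r # vs @ as @ bs) \<subseteq> K" and dist: "distinct (r # vs @ as @ bs)"
  defines "c \<equiv> last (r # vs)"
  shows "(\<integral>\<^sup>+w. chain_weight r vs (\<lambda>_. 1) w * chain_weight c as below_one w
              * chain_weight c bs below_one w \<partial>U01_cube K)
       = ennreal (fact (length as + length bs)
           / (fact (length as) * fact (length bs) * fact (length as + length bs + length vs + 1)))"
proof -
  define G where "G = (\<lambda>y. (tail_op ^^ length as) below_one y * (tail_op ^^ length bs) below_one y)"
  define J where "J = K - set bs - set as - set vs"
  have J: "finite J" "r \<in> J" "set vs \<inter> J = {}" "K - set bs - set as = J \<union> set vs"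
    using K dist by (auto simp: J_def)
  have "(\<integral>\<^sup>+w. chain_weight r vs (\<lambda>_. 1) w * chain_weight c as below_one w
              * chain_weight c bs below_one w \<partial>U01_cube K)
      = (\<integral>\<^sup>+w. 1 * chain_weight r vs G w \<partial>U01_cube (J \<union> set vs))"
    unfolding c_def G_def J(4)[symmetric] using nn_integral_integrate_branches[OF K dist] by simp
  also have "\<dots> = (\<integral>\<^sup>+w. 1 * (tail_op ^^ length vs) G (w r) \<partial>U01_cube J)"
    by (rule nn_integral_chain_weight) (use J dist in \<open>auto simp: G_def\<close>)
  also have "\<dots> = (\<integral>\<^sup>+y. (tail_op ^^ length vs) G y \<partial>U01)"
    using nn_integral_U01_cube_component[OF J(1,2)] by (simp add: G_def)
  also have "\<dots> = ennreal (fact (length as + length bs)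
           / (fact (length as) * fact (length bs) * fact (length as + length bs + length vs + 1)))"
    unfolding G_def by (rule nn_integral_funpow_tail_op_branches)
  finally show ?thesis .
qed

subsection \<open>Paths of the tree\<close>

lemma tree_paths_0: "tree_paths 0 = {[]}"
  by (auto simp: tree_paths_def tree_node_def)

lemma tree_paths_Suc: "tree_paths (Suc L) = (\<lambda>(c, r). c # r) ` ({..<Suc L} \<times> tree_paths L)"
proof (intro set_eqI iffI)
  fix xs assume xs: "xs \<in> tree_paths (Suc L)"
  then obtain c r where xs_eq: "xs = c # r"
    by (cases xs) (auto simp: tree_paths_def)
  have "r ! j < L - j" if "j < length r" for j
  proof -
    have "(c # r) ! Suc j < Suc L - Suc j"
      using xs that by (auto simp: xs_eq tree_paths_def tree_node_def)
    then show ?thesis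
      by simp
  qed
  then have "r \<in> tree_paths L"
    using xs by (auto simp: xs_eq tree_paths_def tree_node_def)
  moreover have "c < Suc L"
    using xs by (auto simp: xs_eq tree_paths_def tree_node_def)
  ultimately show "xs \<in> (\<lambda>(c, r). c # r) ` ({..<Suc L} \<times> tree_paths L)"
    using xs_eq by auto
next
  fix xs assume "xs \<in> (\<lambda>(c, r). c # r) ` ({..<Suc L} \<times> tree_paths L)"
  then obtain c r where xs_eq: "xs = c # r" and c: "c < Suc L" and r: "r \<in> tree_paths L"
    by auto
  have "(c # r) ! j < Suc L - j" if "j < Suc L" for j
    using c r that by (cases j) (auto simp: tree_paths_def tree_node_def)
  then show "xs \<in> tree_paths (Suc L)"
    using r by (auto simp: xs_eq tree_paths_def tree_node_def)
qed

lemma inj_on_Cons_pair: "inj_on (\<lambda>(c, r). c # r) A"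
  by (auto simp: inj_on_def)

lemma finite_tree_paths: "finite (tree_paths L)"
  by (induction L) (simp_all add: tree_paths_0 tree_paths_Suc)

lemma card_tree_paths: "card (tree_paths L) = fact L"
  by (induction L)
    (simp_all add: tree_paths_0 tree_paths_Suc card_image[OF inj_on_Cons_pair] card_cartesian_product)

lemma sum_tree_paths_Suc:
  "(\<Sum>xs\<in>tree_paths (Suc L). g xs) = (\<Sum>c<Suc L. \<Sum>r\<in>tree_paths L. g (c # r))"
  unfolding tree_paths_Suc sum.reindex[OF inj_on_Cons_pair] sum.cartesian_product
  by (simp add: case_prod_beta')

lemma take_path_in_random_nodes:
  "xs \<in> tree_paths L \<Longrightarrow> k < L \<Longrightarrow> take k xs \<in> random_nodes L"
  by (auto simp: tree_paths_def random_nodes_def tree_node_def)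

lemma finite_random_nodes: "finite (random_nodes L)"
proof (rule finite_subset)
  show "random_nodes L \<subseteq> {xs. set xs \<subseteq> {..<L} \<and> length xs \<le> L}"
    by (auto simp: random_nodes_def tree_node_def in_set_conv_nth) (meson diff_le_self order_less_le_trans)
qed (rule finite_lists_length_le, simp)

lemma open_path_iff_sorted:
  assumes "length xs = L"
  shows "open_path L w xs \<longleftrightarrow> sorted_wrt (<) (map (\<lambda>k. w (take k xs)) [0..<L] @ [1])"
proof -
  define f where "f k = node_value L w (take k xs)" for k
  have "open_path L w xs \<longleftrightarrow> (\<forall>k<L. f k < f (Suc k))"
    by (simp add: open_path_def f_def)
  also have "\<dots> \<longleftrightarrow> sorted_wrt (<) (map f [0..<Suc L])"
    by (simp add: sorted_wrt_iff_nth_Suc_transp[OF transp_on_less] del: upt_Suc)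
  also have "map f [0..<Suc L] = map (\<lambda>k. w (take k xs)) [0..<L] @ [1]"
    using assms by (simp add: f_def node_value_def)
  finally show ?thesis .
qed

definition path_nodes :: "'a list \<Rightarrow> nat \<Rightarrow> nat \<Rightarrow> 'a list list" where
  "path_nodes xs i j = map (\<lambda>k. take k xs) [i..<j]"

lemma length_path_nodes [simp]: "length (path_nodes xs i j) = j - i"
  by (simp add: path_nodes_def)

lemma path_nodes_append:
  assumes "i \<le> j" "j \<le> k"
  shows "path_nodes xs i k = path_nodes xs i j @ path_nodes xs j k"
proof -
  have "[i..<k] = [i..<j] @ [j..<k]"
    using assms upt_add_eq_append[of i j "k - j"] by simp
  then show ?thesis
    by (simp add: path_nodes_def)
qed

lemma path_nodes_0: "1 \<le> j \<Longrightarrow> path_nodes xs 0 j = [] # path_nodes xs 1 j"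
  by (simp add: path_nodes_def upt_conv_Cons)

lemma path_nodes_in_random_nodes: "xs \<in> tree_paths L \<Longrightarrow> set (path_nodes xs i L) \<subseteq> random_nodes L"
  using take_path_in_random_nodes by (auto simp: path_nodes_def)

lemma indicator_open_path:
  assumes "length xs = L" "1 \<le> L"
  shows "indicator {w. open_path L w xs} w = chain_weight [] (path_nodes xs 1 L) below_one w"
proof -
  define l where "l = map (\<lambda>k. w (take k xs)) [0..<L]"
  have l: "map w ([] # path_nodes xs 1 L) = l"
    using assms by (simp add: l_def path_nodes_def upt_conv_Cons)
  then have last_l: "w (last ([] # path_nodes xs 1 L)) = last l"
    by (metis last_map list.distinct(1) list.map_disc_iff)
  have "open_path L w xs \<longleftrightarrow> sorted_wrt (<) l \<and> last l < 1"
    using open_path_iff_sorted[OF assms(1), of w] sorted_wrt_less_append[of l "[1]"] assms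
    by (simp add: l_def)
  then show ?thesis
    unfolding chain_weight_def l last_l by (simp add: below_one_def indicator_def)
qed

fun lcp :: "'a list \<Rightarrow> 'a list \<Rightarrow> nat" where
  "lcp (x # xs) (y # ys) = (if x = y then Suc (lcp xs ys) else 0)"
| "lcp _ _ = 0"

lemma lcp_self: "lcp xs xs = length xs"
  by (induction xs) auto

lemma take_eq_if_le_lcp: "k \<le> lcp xs ys \<Longrightarrow> take k xs = take k ys"
proof (induction xs ys arbitrary: k rule: lcp.induct)
  case (1 x xs y ys)
  then show ?case by (cases k) (auto split: if_splits)
qed auto

lemma take_neq_if_lcp_less:
  "lcp xs ys < k \<Longrightarrow> k \<le> length xs \<Longrightarrow> k \<le> length ys \<Longrightarrow> take k xs \<noteq> take k ys"
proof (induction xs ys arbitrary: k rule: lcp.induct)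
  case (1 x xs y ys)
  then show ?case by (cases k) (auto split: if_splits)
qed auto

lemma path_nodes_eq_if_le_lcp: "j \<le> Suc (lcp xs ys) \<Longrightarrow> path_nodes xs i j = path_nodes ys i j"
  unfolding path_nodes_def by (intro map_cong refl take_eq_if_le_lcp) auto

lemma inj_on_take: "length xs = L \<Longrightarrow> inj_on (\<lambda>k. take k xs) {0..<L}"
  by (intro inj_onI) (metis atLeastLessThan_iff length_take min.absorb4 nless_le)

lemma distinct_path_nodes: "length xs = L \<Longrightarrow> distinct (path_nodes xs 0 L)"
  by (simp add: path_nodes_def distinct_map inj_on_take)

lemma distinct_path_nodes_branch:
  assumes "length xs = L" "length ys = L" "lcp xs ys < s"
  shows "distinct (path_nodes xs 0 L @ path_nodes ys s L)"
proof -
  have "inj_on (\<lambda>k. take k ys) {s..<L}"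
    using inj_on_take[OF assms(2)] by (rule inj_on_subset) auto
  moreover have "take j xs \<noteq> take k ys" if "j < L" "s \<le> k" "k < L" for j k
  proof
    assume eq: "take j xs = take k ys"
    then have "j = k"
      using assms that by (metis length_take min.absorb4 order.strict_implies_order)
    then show False
      using eq take_neq_if_lcp_less[of xs ys k] assms that by simp
  qed
  ultimately show ?thesis
    using distinct_path_nodes[OF assms(1)] by (auto simp: path_nodes_def distinct_map)
qed

text \<open>Below the branching level s the two paths share their nodes.\<close>

lemma indicator_open_pair:
  assumes len: "length xs = L" "length ys = L" and s: "1 \<le> s" "s \<le> L" "s \<le> Suc (lcp xs ys)"
  defines "c \<equiv> last ([] # path_nodes xs 1 s)"
  shows "indicator {w. open_path L w xs} w * indicator {w. open_path L w ys} w
     = chain_weight [] (path_nodes xs 1 s) (\<lambda>_. 1) w * chain_weight c (path_nodes xs s L) below_one w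
        * chain_weight c (path_nodes ys s L) below_one w"
proof -
  have "1 \<le> L"
    using s by simp
  have path_ys: "path_nodes ys 1 L = path_nodes xs 1 s @ path_nodes ys s L"
    using path_nodes_append[OF s(1,2), of ys] path_nodes_eq_if_le_lcp[OF s(3), of 1] by simp
  have ind_xs: "indicator {w. open_path L w xs} w
      = chain_weight [] (path_nodes xs 1 s) (\<lambda>_. 1) w * chain_weight c (path_nodes xs s L) below_one w"
    unfolding indicator_open_path[OF len(1) \<open>1 \<le> L\<close>] path_nodes_append[OF s(1,2), of xs] c_def
    by (rule chain_weight_append)
  have ind_ys: "indicator {w. open_path L w ys} w
      = chain_weight [] (path_nodes xs 1 s) (\<lambda>_. 1) w * chain_weight c (path_nodes ys s L) below_one w"
    unfolding indicator_open_path[OF len(2) \<open>1 \<le> L\<close>] path_ys c_def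
    by (rule chain_weight_append)
  have "indicator {w. open_path L w xs} w * indicator {w. open_path L w ys} w
      = (chain_weight [] (path_nodes xs 1 s) (\<lambda>_. 1) w * chain_weight [] (path_nodes xs 1 s) (\<lambda>_. 1) w)
        * chain_weight c (path_nodes xs s L) below_one w * chain_weight c (path_nodes ys s L) below_one w"
    unfolding ind_xs ind_ys by (simp only: ac_simps)
  then show ?thesis
    by (simp only: chain_weight_one_idem)
qed

text \<open>Probability that two paths are both open when each has a random nodes
  of its own (a = L - 1 - lcp xs ys).\<close>

definition pair_open_prob :: "nat \<Rightarrow> nat \<Rightarrow> real" where
  "pair_open_prob L a = fact (2*a) / (fact a ^ 2 * fact (L + a))"

lemma nn_integral_open_pair:
  assumes xs: "xs \<in> tree_paths L" and ys: "ys \<in> tree_paths L" and L: "1 \<le> L"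
  shows "(\<integral>\<^sup>+w. indicator {w. open_path L w xs} w * indicator {w. open_path L w ys} w \<partial>tree_space L)
     = ennreal (pair_open_prob L (L - 1 - lcp xs ys))"
proof -
  have len: "length xs = L" "length ys = L"
    using xs ys by (auto simp: tree_paths_def)
  define s where "s = min (Suc (lcp xs ys)) L"
  have s: "1 \<le> s" "s \<le> L" "s \<le> Suc (lcp xs ys)"
    using L by (auto simp: s_def)
  have nodes: "[] # path_nodes xs 1 s @ path_nodes xs s L = path_nodes xs 0 L"
    using path_nodes_0[OF s(1), of xs] path_nodes_append[OF _ s(2), of 0 xs] by simp
  have "distinct (path_nodes xs 0 L @ path_nodes ys s L)"
  proof (cases "s = L")
    case True
    then show ?thesis
      using distinct_path_nodes[OF len(1)] by (simp add: path_nodes_def)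
  next
    case False
    then show ?thesis
      using distinct_path_nodes_branch[OF len, of s] by (simp add: s_def)
  qed
  moreover have "set (path_nodes xs 0 L @ path_nodes ys s L) \<subseteq> random_nodes L"
    using path_nodes_in_random_nodes[OF xs] path_nodes_in_random_nodes[OF ys] by auto
  ultimately have "(\<integral>\<^sup>+w. indicator {w. open_path L w xs} w * indicator {w. open_path L w ys} w \<partial>tree_space L)
    = ennreal (fact ((L - s) + (L - s)) / (fact (L - s) * fact (L - s) * fact ((L - s) + (L - s) + (s - 1) + 1)))"
    unfolding indicator_open_pair[OF len s] tree_space_def nodes[symmetric]
    using nn_integral_two_branches[OF finite_random_nodes, of "[]" "path_nodes xs 1 s" "path_nodes xs s L"
        "path_nodes ys s L" L]
    by simp
  moreover have "L - s = L - 1 - lcp xs ys" "(L - s) + (L - s) + (s - 1) + 1 = L + (L - s)"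
    using s by (auto simp: s_def)
  ultimately show ?thesis
    by (simp only: pair_open_prob_def power2_eq_square mult_2)
qed

lemma sum_if_eq_const:
  fixes X Y :: real
  assumes "finite A" "c \<in> A"
  shows "(\<Sum>c'\<in>A. if c = c' then X else Y) = X + (card A - 1) * Y"
proof -
  have "(\<Sum>c'\<in>A. if c = c' then X else Y) = (if c = c then X else Y) + (\<Sum>c'\<in>A - {c}. if c = c' then X else Y)"
    by (rule sum.remove[OF assms])
  also have "(\<Sum>c'\<in>A - {c}. if c = c' then X else Y) = (\<Sum>c'\<in>A - {c}. Y)"
    by (rule sum.cong) auto
  finally show ?thesis
    using assms by (simp add: of_nat_diff card_Diff_singleton)
qed

lemma sum_tree_paths_pairs_lcp:
  fixes f :: "nat \<Rightarrow> real"
  shows "(\<Sum>xs\<in>tree_paths L. \<Sum>ys\<in>tree_paths L. f (lcp xs ys))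
     = (\<Sum>m<L. fact L * real (L-m-1) * fact (L-m-1) * f m) + fact L * f L"
proof (induction L arbitrary: f)
  case 0
  then show ?case by (simp add: tree_paths_0)
next
  case (Suc L)
  have card: "card (tree_paths L) = fact L"
    by (rule card_tree_paths)
  define P where "P = tree_paths L"
  have "(\<Sum>xs\<in>tree_paths (Suc L). \<Sum>ys\<in>tree_paths (Suc L). f (lcp xs ys))
     = (\<Sum>c<Suc L. \<Sum>r\<in>P. \<Sum>c'<Suc L. \<Sum>r'\<in>P. f (lcp (c # r) (c' # r')))"
    unfolding sum_tree_paths_Suc P_def ..
  also have "\<dots> = (\<Sum>c<Suc L. \<Sum>c'<Suc L. \<Sum>r\<in>P. \<Sum>r'\<in>P. f (lcp (c # r) (c' # r')))"
    by (rule sum.cong[OF refl], rule sum.swap)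
  also have "\<dots> = (\<Sum>c<Suc L. \<Sum>c'<Suc L. if c = c' then (\<Sum>r\<in>P. \<Sum>r'\<in>P. f (Suc (lcp r r'))) else fact L * fact L * f 0)"
    by (rule sum.cong[OF refl], rule sum.cong[OF refl]) (simp add: card P_def)
  also have "\<dots> = (\<Sum>c<Suc L. (\<Sum>r\<in>P. \<Sum>r'\<in>P. f (Suc (lcp r r'))) + real L * (fact L * fact L * f 0))"
    by (rule sum.cong[OF refl], subst sum_if_eq_const) auto
  also have "\<dots> = real (Suc L) * ((\<Sum>m<L. fact L * real (L-m-1) * fact (L-m-1) * f (Suc m)) + fact L * f (Suc L)
        + real L * (fact L * fact L * f 0))"
    using Suc.IH[of "\<lambda>m. f (Suc m)"] by (simp add: P_def)
  also have "\<dots> = (\<Sum>m<Suc L. fact (Suc L) * real (Suc L-m-1) * fact (Suc L-m-1) * f m) + fact (Suc L) * f (Suc L)"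
    unfolding sum.lessThan_Suc_shift
    by (simp add: sum_distrib_left algebra_simps)
  finally show ?case .
qed

subsection \<open>The variance sum\<close>

definition var_term :: "nat \<Rightarrow> nat \<Rightarrow> real" where
  "var_term L a = fact (2*a) * fact L / (fact a * fact (L+a))"

definition var_sum :: "nat \<Rightarrow> real" where
  "var_sum L = (\<Sum>a<L. real a * var_term L a)"

lemma var_term_Suc_right:
  "var_term L (Suc a) = var_term L a * (2 * (2 * real a + 1)) / (real L + real a + 1)"
proof -
  have cancel: "(2*x + 2) * ((2*x + 1) * F) * M / ((x + 1) * f * ((y + x + 1) * g))
      = F * M * (2 * (2*x + 1)) / (f * g * (y + x + 1))"
    if "f \<noteq> 0" "g \<noteq> 0" "y + x + 1 \<noteq> 0" "x + 1 \<noteq> 0" for x y F M f g :: real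
    using that by (subst frac_eq_eq) (simp_all, algebra)
  have "fact (2 * Suc a) = real (2*a+2) * (real (2*a+1) * (fact (2*a) :: real))"
    by (simp add: algebra_simps)
  moreover have "fact (L + Suc a) = real (L+a+1) * (fact (L+a) :: real)"
    "fact (Suc a) = real (a+1) * (fact a :: real)"
    by simp_all
  moreover have "real a + 1 \<noteq> 0" "real L + real a + 1 \<noteq> 0"
    by (simp_all add: add_nonneg_pos)
  ultimately show ?thesis
    using cancel[where x = "real a" and y = "real L" and F = "fact (2 * a)" and M = "fact L" and f = "fact a" and g = "fact (L + a)"]
    unfolding var_term_def by (simp add: add_ac)
qed

lemma var_term_Suc_left: "var_term (Suc L) a = var_term L a * (real L + 1) / (real L + real a + 1)"
proof -
  have cancel: "F * ((y + 1) * M) / (f * ((y + x + 1) * g)) = F * M / (f * g) * (y + 1) / (y + x + 1)"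
    if "f \<noteq> 0" "g \<noteq> 0" "y + x + 1 \<noteq> 0" for x y F M f g :: real
    using that by (simp add: field_simps)
  have facts: "fact (Suc L + a) = (real L + real a + 1) * (fact (L + a) :: real)"
    "fact (Suc L) = (real L + 1) * (fact L :: real)"
    by (simp_all add: add_ac)
  have "fact (2 * a) * ((real L + 1) * fact L) / (fact a * ((real L + real a + 1) * fact (L + a)))
      = fact (2 * a) * fact L / (fact a * fact (L + a)) * (real L + 1) / (real L + real a + 1)"
    by (rule cancel) (simp_all add: add_nonneg_pos)
  then show ?thesis
    unfolding var_term_def facts .
qed

lemma var_term_diag: "var_term L L = 1"
  by (simp add: var_term_def mult_2)

lemma var_term_0: "var_term L 0 = 1"
  by (simp add: var_term_def)

text \<open>Wilf-Zeilberger certificate: var_cert_step telescopes over a and yields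
  the recurrence for var_sum.\<close>

definition var_cert :: "nat \<Rightarrow> nat \<Rightarrow> real" where
  "var_cert L a = (real L + 1) * (2 + (real L - 1) * real a) * var_term L a"

lemma var_cert_step:
  "3 * ((real L)\<^sup>2 - 1) * (a * var_term L a) - 2 * (2 * real L + 1) * (real L - 2) * (a * var_term (Suc L) a)
   = var_cert L (Suc a) - var_cert L a"
proof -
  have identity: "3 * (l\<^sup>2 - 1) * (x * u) - 2 * (2 * l + 1) * (l - 2) * (x * (u * (l + 1) / (l + x + 1)))
      = (l + 1) * (2 + (l - 1) * (x + 1)) * (u * (2 * (2 * x + 1)) / (l + x + 1)) - (l + 1) * (2 + (l - 1) * x) * u"
    if "l + x + 1 > 0" for l x u :: real
  proof -
    have "l + x + 1 \<noteq> 0"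
      using that by simp
    then show ?thesis
      by (simp add: divide_simps) (simp add: algebra_simps power2_eq_square)
  qed
  have "real L + real a + 1 > 0"
    by (simp add: add_nonneg_pos)
  from identity[OF this, of "var_term L a"] show ?thesis
    unfolding var_cert_def var_term_Suc_right var_term_Suc_left by simp
qed

lemma var_sum_recurrence:
  "2 * (2 * real L + 1) * (real L - 2) * var_sum (Suc L)
     = 3 * ((real L)\<^sup>2 - 1) * var_sum L + 2 * real L * (real L + 1) * (real L - 2) - real L * ((real L)\<^sup>2 - 1)"
proof -
  define c where "c = 2 * (2 * real L + 1) * (real L - 2)"
  define P where "P = (\<Sum>a<L. real a * var_term (Suc L) a)"
  have "3 * ((real L)\<^sup>2 - 1) * var_sum L - c * P
      = (\<Sum>a<L. 3 * ((real L)\<^sup>2 - 1) * (a * var_term L a) - c * (a * var_term (Suc L) a))"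
    by (simp only: var_sum_def P_def sum_distrib_left sum_subtractf)
  also have "\<dots> = (\<Sum>a<L. var_cert L (Suc a) - var_cert L a)"
    by (simp only: c_def var_cert_step)
  also have "\<dots> = var_cert L L - var_cert L 0"
    by (rule sum_lessThan_telescope)
  also have "\<dots> = real L * ((real L)\<^sup>2 - 1)"
    by (simp add: var_cert_def var_term_diag var_term_0 algebra_simps power2_eq_square)
  finally have telescope: "3 * ((real L)\<^sup>2 - 1) * var_sum L - c * P = real L * ((real L)\<^sup>2 - 1)" .
  have "var_term (Suc L) L = (real L + 1) / (2 * real L + 1)"
    unfolding var_term_Suc_left var_term_diag by simp
  then have var_sum_Suc: "var_sum (Suc L) = P + real L * ((real L + 1) / (2 * real L + 1))"
    unfolding var_sum_def P_def by (simp only: sum.lessThan_Suc)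
  have last_term: "c * (real L * ((real L + 1) / (2 * real L + 1))) = 2 * real L * (real L + 1) * (real L - 2)"
  proof -
    have scale: "2 * (2 * x + 1) * (x - 2) * (x * ((x + 1) / (2 * x + 1))) = 2 * x * (x + 1) * (x - 2)"
      if "2 * x + 1 \<noteq> 0" for x :: real
      using that by (simp add: field_simps)
    show ?thesis
      unfolding c_def by (rule scale) (simp add: add_nonneg_pos)
  qed
  have "c * var_sum (Suc L) = c * P + c * (real L * ((real L + 1) / (2 * real L + 1)))"
    unfolding var_sum_Suc by (rule distrib_left)
  then show ?thesis
    using telescope last_term unfolding c_def[symmetric] by linarith
qed

definition var_excess :: "nat \<Rightarrow> real" where "var_excess L = var_sum L - real L"

lemma var_excess_Suc:
  assumes "L \<ge> 3"
  shows "var_excess (Suc L) = (3 * (real L ^ 2 - 1) * var_excess L + 4 * (real L + 1)) / (2 * (2 * real L + 1) * (real L - 2))"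
proof -
  have D: "2 * (2 * real L + 1) * (real L - 2) > 0" using assms by simp
  have "2 * (2 * real L + 1) * (real L - 2) * var_excess (Suc L) = 3 * (real L ^ 2 - 1) * var_excess L + 4 * (real L + 1)"
    using var_sum_recurrence[of L] unfolding var_excess_def by (simp add: algebra_simps power2_eq_square)
  then show ?thesis using D by (simp add: field_simps)
qed

text \<open>The coefficient of var_excess L in the recurrence tends to 3/4, so for L \<ge> 7 a bound
  M \<ge> 6 is preserved.\<close>

lemma var_excess_bounded:
  assumes "L \<ge> 7"
  shows "\<bar>var_excess L\<bar> \<le> max 6 \<bar>var_excess 7\<bar>"
  using assms
proof (induction L rule: nat_induct_at_least)
  case base then show ?case by simp
next
  case (Suc L)
  define M where "M = max 6 \<bar>var_excess 7\<bar>"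
  have M6: "M \<ge> 6" by (simp add: M_def)
  have IH: "\<bar>var_excess L\<bar> \<le> M" using Suc.IH by (simp add: M_def)
  define D where "D = 2 * (2 * real L + 1) * (real L - 2)"
  have L7: "real L \<ge> 7" using Suc.hyps by simp
  have D: "D > 0" unfolding D_def using L7 by simp
  have sq: "real L ^ 2 \<ge> 7 * real L" unfolding power2_eq_square using L7 by (intro mult_right_mono) auto
  have c: "3 * (real L ^ 2 - 1) \<ge> 0" using L7 sq by (smt (verit))
  have "\<bar>var_excess (Suc L)\<bar> = \<bar>3 * (real L ^ 2 - 1) * var_excess L + 4 * (real L + 1)\<bar> / D"
    using var_excess_Suc[of L] Suc.hyps D by (simp add: D_def abs_divide)
  also have "\<dots> \<le> (3 * (real L ^ 2 - 1) * M + 4 * (real L + 1)) / D"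
  proof (rule divide_right_mono)
    have "\<bar>3 * (real L ^ 2 - 1) * var_excess L\<bar> \<le> 3 * (real L ^ 2 - 1) * M"
      using c IH by (simp add: abs_mult mult_left_mono)
    then show "\<bar>3 * (real L ^ 2 - 1) * var_excess L + 4 * (real L + 1)\<bar> \<le> 3 * (real L ^ 2 - 1) * M + 4 * (real L + 1)"
      by (smt (verit) of_nat_0_le_iff)
  qed (use D in simp)
  also have "\<dots> \<le> M"
  proof -
    have q: "real L ^ 2 - 6 * real L - 1 \<ge> 6" using L7 sq by (smt (verit))
    have "4 * (real L + 1) \<le> 6 * (real L ^ 2 - 6 * real L - 1)"
      using L7 sq by (simp add: algebra_simps)
    also have "\<dots> \<le> M * (real L ^ 2 - 6 * real L - 1)"
      using M6 q by (intro mult_right_mono) auto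
    finally have "3 * (real L ^ 2 - 1) * M + 4 * (real L + 1) \<le> D * M"
      unfolding D_def by (simp add: algebra_simps power2_eq_square)
    then show ?thesis using D by (simp add: divide_le_eq mult.commute)
  qed
  finally show ?case by (simp add: M_def)
qed

lemma var_sum_over_L_tendsto: "(\<lambda>L. var_sum L / real L) \<longlonglongrightarrow> 1"
proof -
  define M where "M = max 6 \<bar>var_excess 7\<bar>"
  have ev: "eventually (\<lambda>L. \<bar>var_sum L / real L - 1\<bar> \<le> M / real L) sequentially"
    using eventually_ge_at_top[of 7]
  proof eventually_elim
    case (elim L)
    then have L: "real L > 0" by simp
    have "var_sum L / real L - 1 = var_excess L / real L" using L by (simp add: var_excess_def field_simps)
    then show ?case using var_excess_bounded[OF elim] L by (simp add: abs_divide M_def divide_right_mono)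
  qed
  show ?thesis
  proof (rule tendsto_sandwich[where f="\<lambda>L. 1 - M / real L" and h="\<lambda>L. 1 + M / real L"])
    show "eventually (\<lambda>L. 1 - M / real L \<le> var_sum L / real L) sequentially"
      using ev by eventually_elim linarith
    show "eventually (\<lambda>L. var_sum L / real L \<le> 1 + M / real L) sequentially"
      using ev by eventually_elim linarith
    show "(\<lambda>L. 1 - M / real L) \<longlonglongrightarrow> 1"
      using tendsto_diff[OF tendsto_const lim_const_over_n[of M]] by simp
    show "(\<lambda>L. 1 + M / real L) \<longlonglongrightarrow> 1"
      using tendsto_add[OF tendsto_const lim_const_over_n[of M]] by simp
  qed
qed

subsection \<open>Moments of the number of open paths\<close>

definition open_indicator :: "nat \<Rightarrow> nat list \<Rightarrow> (nat list \<Rightarrow> real) \<Rightarrow> real" where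
  "open_indicator L xs = indicator {w. open_path L w xs}"

lemma prob_space_tree_space: "prob_space (tree_space L)"
  unfolding tree_space_def by (rule prob_space_U01_cube)

lemma open_indicator_measurable:
  assumes "xs \<in> tree_paths L" "1 \<le> L"
  shows "open_indicator L xs \<in> borel_measurable (tree_space L)"
proof -
  have "length xs = L"
    using assms by (simp add: tree_paths_def)
  then have "(indicator {w. open_path L w xs} :: _ \<Rightarrow> ennreal) = chain_weight [] (path_nodes xs 1 L) below_one"
    using assms(2) by (intro ext indicator_open_path)
  moreover have "set ([] # path_nodes xs 1 L) \<subseteq> random_nodes L"
    using path_nodes_in_random_nodes[OF assms(1), of 0] assms(2) by (simp add: path_nodes_0)
  ultimately have "(indicator {w. open_path L w xs} :: _ \<Rightarrow> ennreal) \<in> borel_measurable (tree_space L)"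
    unfolding tree_space_def by (simp add: chain_weight_measurable)
  then show ?thesis
    unfolding open_indicator_def by (simp add: borel_measurable_indicator_iff)
qed

lemma
  assumes "xs \<in> tree_paths L" "ys \<in> tree_paths L" "1 \<le> L"
  shows integrable_open_pair: "integrable (tree_space L) (\<lambda>w. open_indicator L xs w * open_indicator L ys w)"
    and integral_open_pair:
      "(\<integral>w. open_indicator L xs w * open_indicator L ys w \<partial>tree_space L) = pair_open_prob L (L - 1 - lcp xs ys)"
proof -
  interpret P: prob_space "tree_space L"
    by (rule prob_space_tree_space)
  have meas: "(\<lambda>w. open_indicator L xs w * open_indicator L ys w) \<in> borel_measurable (tree_space L)"
    using open_indicator_measurable assms by measurable
  show "integrable (tree_space L) (\<lambda>w. open_indicator L xs w * open_indicator L ys w)"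
    by (rule P.integrable_const_bound[where B = 1]) (use meas in \<open>auto simp: open_indicator_def indicator_def\<close>)
  have "(\<integral>w. open_indicator L xs w * open_indicator L ys w \<partial>tree_space L)
      = enn2real (\<integral>\<^sup>+w. indicator {w. open_path L w xs} w * indicator {w. open_path L w ys} w \<partial>tree_space L)"
    using meas by (subst integral_eq_nn_integral)
      (auto simp: open_indicator_def ennreal_mult' ennreal_indicator)
  also have "\<dots> = pair_open_prob L (L - 1 - lcp xs ys)"
    unfolding nn_integral_open_pair[OF assms] by (simp add: pair_open_prob_def)
  finally show "(\<integral>w. open_indicator L xs w * open_indicator L ys w \<partial>tree_space L) = pair_open_prob L (L - 1 - lcp xs ys)" .
qed

lemma open_indicator_idem: "open_indicator L xs w * open_indicator L xs w = open_indicator L xs w"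
  by (simp add: open_indicator_def indicator_def)

lemma Theta_eq_sum_open_indicator: "Theta L w = (\<Sum>xs\<in>tree_paths L. open_indicator L xs w)"
  unfolding Theta_def open_indicator_def
  by (simp add: sum.inter_filter[OF finite_tree_paths, symmetric] indicator_def of_bool_def)

lemma sum_pair_open_prob:
  "(\<Sum>xs\<in>tree_paths L. \<Sum>ys\<in>tree_paths L. pair_open_prob L (L - 1 - lcp xs ys)) = var_sum L + 1"
proof -
  have "(\<Sum>m<L. fact L * real (L-m-1) * fact (L-m-1) * pair_open_prob L (L - 1 - m))
      = (\<Sum>m<L. (\<lambda>a. real a * (fact L * fact a * pair_open_prob L a)) (L - Suc m))"
    by (intro sum.cong) auto
  also have "\<dots> = (\<Sum>a<L. real a * (fact L * fact a * pair_open_prob L a))"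
    by (rule sum.nat_diff_reindex)
  also have "\<dots> = var_sum L"
    unfolding var_sum_def var_term_def pair_open_prob_def by (intro sum.cong) (auto simp: power2_eq_square)
  finally have off_diagonal: "(\<Sum>m<L. fact L * real (L-m-1) * fact (L-m-1) * pair_open_prob L (L - 1 - m)) = var_sum L" .
  have diagonal: "fact L * pair_open_prob L (L - 1 - L) = 1"
    by (simp add: pair_open_prob_def)
  show ?thesis
    using sum_tree_paths_pairs_lcp[of "\<lambda>m. pair_open_prob L (L - 1 - m)" L]
    unfolding off_diagonal diagonal .
qed

lemma
  assumes "1 \<le> L"
  shows integrable_Theta: "integrable (tree_space L) (Theta L)"
    and integral_Theta: "(\<integral>w. Theta L w \<partial>tree_space L) = 1"
proof -
  have integrable: "integrable (tree_space L) (open_indicator L xs)" if "xs \<in> tree_paths L" for xs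
    using integrable_open_pair[OF that that assms] by (simp add: open_indicator_idem)
  have integral: "(\<integral>w. open_indicator L xs w \<partial>tree_space L) = 1 / fact L" if "xs \<in> tree_paths L" for xs
    using integral_open_pair[OF that that assms] that
    by (simp add: open_indicator_idem lcp_self tree_paths_def pair_open_prob_def)
  show "integrable (tree_space L) (Theta L)"
    unfolding Theta_eq_sum_open_indicator[abs_def] using integrable by auto
  show "(\<integral>w. Theta L w \<partial>tree_space L) = 1"
    unfolding Theta_eq_sum_open_indicator using integrable integral
    by (simp add: integral_sum' card_tree_paths)
qed

lemma
  assumes "1 \<le> L"
  shows integrable_Theta_sq: "integrable (tree_space L) (\<lambda>w. (Theta L w)\<^sup>2)"
    and integral_Theta_sq: "(\<integral>w. (Theta L w)\<^sup>2 \<partial>tree_space L) = var_sum L + 1"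
proof -
  have sq: "(Theta L w)\<^sup>2 = (\<Sum>xs\<in>tree_paths L. \<Sum>ys\<in>tree_paths L. open_indicator L xs w * open_indicator L ys w)" for w
    by (simp add: Theta_eq_sum_open_indicator power2_eq_square sum_product)
  have integrable: "integrable (tree_space L) (\<lambda>w. \<Sum>ys\<in>tree_paths L. open_indicator L xs w * open_indicator L ys w)"
    if "xs \<in> tree_paths L" for xs
    using integrable_open_pair[OF that _ assms] by auto
  show "integrable (tree_space L) (\<lambda>w. (Theta L w)\<^sup>2)"
    unfolding sq using integrable by auto
  show "(\<integral>w. (Theta L w)\<^sup>2 \<partial>tree_space L) = var_sum L + 1"
  proof -
    have "(\<integral>w. (Theta L w)\<^sup>2 \<partial>tree_space L)
        = (\<Sum>xs\<in>tree_paths L. \<Sum>ys\<in>tree_paths L. \<integral>w. open_indicator L xs w * open_indicator L ys w \<partial>tree_space L)"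
      unfolding sq using integrable integrable_open_pair[OF _ _ assms]
      by (simp add: integral_sum' del: integral_mult_right integral_mult_left)
    also have "\<dots> = (\<Sum>xs\<in>tree_paths L. \<Sum>ys\<in>tree_paths L. pair_open_prob L (L - 1 - lcp xs ys))"
      by (intro sum.cong refl integral_open_pair assms)
    finally show ?thesis
      by (simp only: sum_pair_open_prob)
  qed
qed

lemma Var_star_eq_var_sum:
  assumes "1 \<le> L"
  shows "Var_star L = var_sum L"
proof -
  interpret prob_space "tree_space L"
    by (rule prob_space_tree_space)
  have "(\<lambda>w. (Theta L w - 1)\<^sup>2) = (\<lambda>w. (Theta L w)\<^sup>2 - 2 * Theta L w + 1)"
    by (auto simp: power2_eq_square algebra_simps)
  then have "Var_star L = (\<integral>w. (Theta L w)\<^sup>2 - 2 * Theta L w + 1 \<partial>tree_space L)"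
    unfolding Var_star_def integral_Theta[OF assms] by simp
  also have "\<dots> = var_sum L"
    using integrable_Theta[OF assms] integrable_Theta_sq[OF assms] integral_Theta[OF assms] integral_Theta_sq[OF assms]
    by (simp add: prob_space)
  finally show ?thesis .
qed

theorem mainTheorem5:
  shows "(\<forall>L\<ge>1. (\<integral>\<omega>. Theta L \<omega> \<partial>tree_space L) = 1) \<and>
         (\<lambda>L. Var_star L / real L) \<longlonglongrightarrow> 1"
proof
  show "\<forall>L\<ge>1. (\<integral>\<omega>. Theta L \<omega> \<partial>tree_space L) = 1"
    using integral_Theta by blast
  have "\<forall>\<^sub>F L in sequentially. var_sum L / real L = Var_star L / real L"
    using eventually_ge_at_top[of 1] by eventually_elim (simp add: Var_star_eq_var_sum)
  then show "(\<lambda>L. Var_star L / real L) \<longlonglongrightarrow> 1"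
    by (rule Lim_transform_eventually[OF var_sum_over_L_tendsto])
qed

end
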